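(* Let $f\in C^1(\mathbb{R})$, let $u_L,u_R\in\mathbb{R}$ and $\varepsilon>0$. Assume that $f'$ is Lipschitz continuous on $[\min\{u_L,u_R\},\max\{u_L,u_R\}]$ if $u_L\neq u_R$ (no further assumption beyond $f\in C^1(\mathbb{R})$ if $u_L=u_R$). Then there exists a unique function $u\in C^2(\mathbb{R})$ satisfying \[ \varepsilon u''(\xi)=\big(f'(u(\xi))-\xi\big)u'(\xi)\quad\text{for all }\xi\in\mathbb{R},\qquad \lim_{\xi\to-\infty}u(\xi)=u_L,\quad \lim_{\xi\to+\infty}u(\xi)=u_R. \]
   Context: This boundary value problem describes self-similar solutions $U(x,t)=u(x/t)$ of the Dafermos regularization $U_t+f(U)_x=\varepsilon t U_{xx}$ of the scalar conservation law $U_t+f(U)_x=0$ with Riemann initial data ($U(x,0)=u_L$ for $x<0$, $U(x,0)=u_R$ for $x>0$). Solutions are understood in the classical sense, i.e. $u\in C^2(\mathbb{R})$. *)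

theory Defs
  imports "HOL-Analysis.Analysis"
begin

definition C1_real :: "(real \<Rightarrow> real) \<Rightarrow> bool" where
  "C1_real g \<longleftrightarrow> (\<forall>x. g differentiable (at x)) \<and> continuous_on UNIV (deriv g)"

definition C2_real :: "(real \<Rightarrow> real) \<Rightarrow> bool" where
  "C2_real g \<longleftrightarrow> (\<forall>x. g differentiable (at x)) \<and> (\<forall>x. deriv g differentiable (at x))
      \<and> continuous_on UNIV (deriv (deriv g))"

end

theory Submission
  imports Defs "HOL-Real_Asymp.Real_Asymp"
begin

text \<open>Uniqueness: along a profile \<open>u\<close> the flux \<open>\<epsilon> u' + \<xi> u - f(u)\<close> has derivative \<open>u\<close>, and
  since profiles converge exponentially fast, the difference \<open>H\<close> of the fluxes of two profiles
  vanishes at \<open>\<plusminus>\<infinity>\<close>. At a positive maximum of \<open>H\<close> the profiles agree, so there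
  \<open>H = \<epsilon> (u - v)' > 0\<close> and \<open>H' = u - v\<close> becomes positive, which is impossible; by symmetry
  \<open>H = 0\<close>, so \<open>u - v = H' = 0\<close>.

  Existence for \<open>u\<^sub>L < u\<^sub>R\<close> (the case \<open>u\<^sub>L > u\<^sub>R\<close> follows by reflecting \<open>f\<close>): extend \<open>f'\<close> from
  \<open>[u\<^sub>L, u\<^sub>R]\<close> to a bounded Lipschitz function \<open>g\<close>. For every \<open>\<alpha>\<close> and small \<open>\<beta> > 0\<close>, Banach's
  fixed point theorem in an exponentially weighted space gives a solution of
  \<open>u(\<xi>) = \<alpha> + \<beta> \<integral>\<^sub>0\<^sup>\<xi> exp ((\<integral>\<^sub>0\<^sup>s g(u) - s\<^sup>2/2) / \<epsilon>) ds\<close>, an increasing profile of the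
  equation with speed \<open>g\<close> whose limits depend continuously on \<open>(\<alpha>, \<beta>)\<close>. Brouwer's fixed point
  theorem produces parameters with limits \<open>u\<^sub>L\<close> and \<open>u\<^sub>R\<close>; then \<open>u\<close> stays in \<open>[u\<^sub>L, u\<^sub>R]\<close>,
  where \<open>g = f'\<close>.\<close>

definition primitive :: "(real \<Rightarrow> real) \<Rightarrow> real \<Rightarrow> real" where
  "primitive h x = integral {0..x} h - integral {x..0} h"

lemma primitive_0 [simp]: "primitive h 0 = 0"
  by (simp add: primitive_def)

lemma primitive_eq_integral_diff:
  assumes h: "continuous_on UNIV h" and "a \<le> 0" "a \<le> y"
  shows "primitive h y = integral {a..y} h - integral {a..0} h"
proof (cases "0 \<le> y")
  case True
  have "h integrable_on {a..y}"
    by (intro integrable_continuous_real continuous_on_subset[OF h]) auto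
  then have "integral {a..0} h + integral {0..y} h = integral {a..y} h"
    using Henstock_Kurzweil_Integration.integral_combine \<open>a \<le> 0\<close> True by blast
  moreover have "integral {y..0} h = 0"
    using True by (cases "y = 0") auto
  ultimately show ?thesis
    unfolding primitive_def by simp
next
  case False
  have "h integrable_on {a..0}"
    by (intro integrable_continuous_real continuous_on_subset[OF h]) auto
  moreover have "y \<le> 0"
    using False by simp
  ultimately have "integral {a..y} h + integral {y..0} h = integral {a..0} h"
    using Henstock_Kurzweil_Integration.integral_combine[OF \<open>a \<le> y\<close>] by blast
  moreover have "integral {0..y} h = 0"
    using False by simp
  ultimately show ?thesis
    unfolding primitive_def by simp
qed

lemma has_real_derivative_primitive:
  assumes h: "continuous_on UNIV h"
  shows "(primitive h has_real_derivative h x) (at x)"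
proof -
  define a where "a = - \<bar>x\<bar> - 1"
  have "((\<lambda>y. integral {a..y} h) has_real_derivative h x) (at x within {a..\<bar>x\<bar> + 1})"
    by (rule integral_has_real_derivative) (auto intro: continuous_on_subset[OF h] simp: a_def)
  then have "((\<lambda>y. integral {a..y} h) has_real_derivative h x) (at x)"
    by (subst (asm) at_within_interior) (auto simp: a_def)
  then have "((\<lambda>y. integral {a..y} h - integral {a..0} h) has_real_derivative h x) (at x)"
    by (auto intro!: derivative_eq_intros)
  then show ?thesis
  proof (rule has_field_derivative_transform_within_open[where S = "{a<..}"])
    show "integral {a..y} h - integral {a..0} h = primitive h y" if "y \<in> {a<..}" for y
      using primitive_eq_integral_diff[OF h, of a y] that by (auto simp: a_def)
  qed (auto simp: a_def)
qed

lemma continuous_on_primitive: "continuous_on UNIV h \<Longrightarrow> continuous_on UNIV (primitive h)"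
  using has_real_derivative_primitive
  by (meson DERIV_continuous continuous_at_imp_continuous_on)

lemma abs_le_if_derivative_le_majorant:
  fixes F F' Q q :: "real \<Rightarrow> real"
  assumes F: "\<And>t. (F has_real_derivative F' t) (at t)" and "F 0 = 0"
    and Q: "\<And>t. t \<ge> 0 \<Longrightarrow> (Q has_real_derivative q t) (at t)" and "Q 0 = 0"
    and F'_le: "\<And>t. \<bar>F' t\<bar> \<le> q \<bar>t\<bar>"
  shows "\<bar>F x\<bar> \<le> Q \<bar>x\<bar>"
proof (cases "0 \<le> x")
  case True
  have "Q 0 + \<sigma> * F 0 \<le> Q x + \<sigma> * F x" if "\<bar>\<sigma>\<bar> = 1" for \<sigma>
  proof (rule DERIV_nonneg_imp_nondecreasing[OF True])
    fix t :: real assume "0 \<le> t"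
    then have "0 \<le> q t + \<sigma> * F' t"
      using F'_le[of t] that by (auto simp: abs_if split: if_splits)
    then show "\<exists>y. ((\<lambda>t. Q t + \<sigma> * F t) has_real_derivative y) (at t) \<and> 0 \<le> y"
      using \<open>0 \<le> t\<close> by (intro exI[of _ "q t + \<sigma> * F' t"]) (auto intro!: derivative_eq_intros Q F)
  qed
  from this[of 1] this[of "-1"] show ?thesis
    using True \<open>F 0 = 0\<close> \<open>Q 0 = 0\<close> by auto
next
  case False
  have "Q (- 0) + \<sigma> * F 0 \<le> Q (- x) + \<sigma> * F x" if "\<bar>\<sigma>\<bar> = 1" for \<sigma>
  proof (rule DERIV_nonpos_imp_nonincreasing[where f = "\<lambda>t. Q (- t) + \<sigma> * F t"])
    fix t :: real assume "x \<le> t" "t \<le> 0"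
    then have "- q (- t) + \<sigma> * F' t \<le> 0"
      using F'_le[of t] that by (auto simp: abs_if split: if_splits)
    moreover have "((\<lambda>t. Q (- t)) has_real_derivative q (- t) * (- 1)) (at t)"
      by (rule DERIV_chain2[OF Q]) (use \<open>t \<le> 0\<close> in \<open>auto intro!: derivative_eq_intros\<close>)
    ultimately show "\<exists>y. ((\<lambda>t. Q (- t) + \<sigma> * F t) has_real_derivative y) (at t) \<and> y \<le> 0"
      by (intro exI[of _ "q (- t) * (- 1) + \<sigma> * F' t"]) (auto intro!: derivative_eq_intros F)
  qed (use False in auto)
  from this[of 1] this[of "-1"] show ?thesis
    using False \<open>F 0 = 0\<close> \<open>Q 0 = 0\<close> by auto
qed

lemma abs_exp_diff_le:
  fixes x y :: real
  shows "\<bar>exp x - exp y\<bar> \<le> max (exp x) (exp y) * \<bar>x - y\<bar>"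
proof -
  have *: "exp x - exp y \<le> exp x * (x - y)" for x y :: real
  proof -
    have "exp x * (1 + (y - x)) \<le> exp x * exp (y - x)"
      using exp_ge_add_one_self[of "y - x"] by simp
    then show ?thesis
      by (simp add: exp_diff algebra_simps)
  qed
  show ?thesis
    using *[of x y] *[of y x] by (simp add: abs_if max_def algebra_simps)
qed

lemma mono_tendsto_Sup_at_top:
  fixes u :: "real \<Rightarrow> real"
  assumes "mono u" and "bdd_above (range u)"
  shows "(u \<longlongrightarrow> Sup (range u)) at_top"
proof (rule order_tendstoI)
  fix y assume "y < Sup (range u)"
  then obtain x0 where "y < u x0"
    using less_cSup_iff[of "range u" y] assms(2) by auto
  then show "\<forall>\<^sub>F x in at_top. y < u x"
    unfolding eventually_at_top_linorder by (metis less_le_trans \<open>mono u\<close> monoD)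
next
  fix y assume "Sup (range u) < y"
  then show "\<forall>\<^sub>F x in at_top. u x < y"
    using cSUP_upper[OF _ assms(2)] by (intro always_eventually) (meson UNIV_I le_less_trans)
qed

lemma mono_tendsto_Inf_at_bot:
  fixes u :: "real \<Rightarrow> real"
  assumes "mono u" and "bdd_below (range u)"
  shows "(u \<longlongrightarrow> Inf (range u)) at_bot"
proof (rule order_tendstoI)
  fix y assume "Inf (range u) < y"
  then obtain x0 where "u x0 < y"
    using cInf_less_iff[of "range u" y] assms(2) by auto
  then show "\<forall>\<^sub>F x in at_bot. u x < y"
    unfolding eventually_at_bot_linorder by (metis le_less_trans \<open>mono u\<close> monoD)
next
  fix y assume "y < Inf (range u)"
  then show "\<forall>\<^sub>F x in at_bot. y < u x"
    using cINF_lower[OF assms(2)] by (intro always_eventually) (meson UNIV_I less_le_trans)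
qed

lemma bounded_if_tendsto_at_bot_at_top:
  fixes u :: "real \<Rightarrow> real"
  assumes u: "continuous_on UNIV u" and "(u \<longlongrightarrow> l) at_bot" and "(u \<longlongrightarrow> r) at_top"
  obtains R where "\<And>x. \<bar>u x\<bar> \<le> R"
proof -
  obtain X1 where X1: "\<And>x. x \<ge> X1 \<Longrightarrow> \<bar>u x - r\<bar> < 1"
    using tendstoD[OF \<open>(u \<longlongrightarrow> r) at_top\<close>, of 1]
    unfolding eventually_at_top_linorder dist_real_def by auto
  obtain X2 where X2: "\<And>x. x \<le> X2 \<Longrightarrow> \<bar>u x - l\<bar> < 1"
    using tendstoD[OF \<open>(u \<longlongrightarrow> l) at_bot\<close>, of 1]
    unfolding eventually_at_bot_linorder dist_real_def by auto
  have "bounded (u ` {X2..X1})"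
    by (intro compact_imp_bounded compact_continuous_image continuous_on_subset[OF u]) auto
  then obtain R0 where R0: "\<And>x. x \<in> {X2..X1} \<Longrightarrow> \<bar>u x\<bar> \<le> R0"
    unfolding bounded_iff by (auto simp del: atLeastAtMost_iff)
  have "\<bar>u x\<bar> \<le> max R0 (max (\<bar>l\<bar> + 1) (\<bar>r\<bar> + 1))" for x
    using X1[of x] X2[of x] R0[of x] by (cases "x \<le> X2"; cases "x \<ge> X1") auto
  then show ?thesis
    using that by blast
qed

lemma continuous_attains_max_if_tendsto_0:
  fixes H :: "real \<Rightarrow> real"
  assumes H: "continuous_on UNIV H" and "(H \<longlongrightarrow> 0) at_bot" and "(H \<longlongrightarrow> 0) at_top"
    and "H x1 > 0"
  obtains x0 where "\<And>y. H y \<le> H x0"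
proof -
  obtain X1 where X1: "\<And>x. x \<ge> X1 \<Longrightarrow> \<bar>H x\<bar> < H x1"
    using tendstoD[OF \<open>(H \<longlongrightarrow> 0) at_top\<close> \<open>H x1 > 0\<close>]
    unfolding eventually_at_top_linorder dist_real_def by auto
  obtain X2 where X2: "\<And>x. x \<le> X2 \<Longrightarrow> \<bar>H x\<bar> < H x1"
    using tendstoD[OF \<open>(H \<longlongrightarrow> 0) at_bot\<close> \<open>H x1 > 0\<close>]
    unfolding eventually_at_bot_linorder dist_real_def by auto
  define I where "I = {min X2 x1..max X1 x1}"
  have "\<exists>x\<in>I. \<forall>y\<in>I. H y \<le> H x"
    by (rule continuous_attains_sup) (auto simp: I_def intro: continuous_on_subset[OF H])
  then obtain x0 where x0: "\<And>y. y \<in> I \<Longrightarrow> H y \<le> H x0"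
    by blast
  have "H y \<le> H x0" for y
  proof (cases "y \<in> I")
    case False
    then have "\<bar>H y\<bar> < H x1"
      using X1 X2 by (force simp: I_def)
    then show ?thesis
      using x0[of x1] by (auto simp: I_def)
  qed (use x0 in auto)
  then show ?thesis
    using that by blast
qed

lemma continuous_on_if_tail_estimate:
  fixes F :: "'a::metric_space \<Rightarrow> real"
  assumes est: "\<And>p q x. p \<in> S \<Longrightarrow> q \<in> S \<Longrightarrow> x \<ge> 0 \<Longrightarrow>
      \<bar>F p - F q\<bar> \<le> A * exp (- x) + exp (l * x) * L * dist p q"
    and "A \<ge> 0" and "L \<ge> 0"
  shows "continuous_on S F"
  unfolding continuous_on_iff
proof (intro ballI allI impI)
  fix p and e :: real
  assume "p \<in> S" and "e > 0"
  define x where "x = max 0 (ln (4 * (A + 1) / e))"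
  have "x \<ge> 0"
    by (simp add: x_def)
  have "4 * (A + 1) / e \<le> exp x"
    using \<open>A \<ge> 0\<close> \<open>e > 0\<close> unfolding x_def
    by (metis exp_le_cancel_iff exp_ln max.cobounded2 divide_pos_pos add_nonneg_pos
        zero_less_numeral zero_less_one mult_pos_pos)
  then have "A * exp (- x) \<le> A * (e / (4 * (A + 1)))"
    using \<open>A \<ge> 0\<close> \<open>e > 0\<close> by (intro mult_left_mono) (auto simp: exp_minus field_simps)
  also have "\<dots> < e / 2"
    using \<open>A \<ge> 0\<close> \<open>e > 0\<close> by (simp add: field_simps) (auto intro!: add_pos_nonneg)
  finally have tail: "A * exp (- x) < e / 2" .
  define E where "E = exp (l * x) * L + 1"
  have "E > 0"
    using \<open>L \<ge> 0\<close> by (simp add: E_def add_nonneg_pos)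
  show "\<exists>d>0. \<forall>q\<in>S. dist q p < d \<longrightarrow> dist (F q) (F p) < e"
  proof (intro exI[of _ "e / (2 * E)"] conjI ballI impI)
    fix q assume "q \<in> S" and "dist q p < e / (2 * E)"
    then have "exp (l * x) * L * dist q p \<le> E * (e / (2 * E))"
      using \<open>E > 0\<close> unfolding E_def by (intro mult_mono) auto
    also have "\<dots> = e / 2"
      using \<open>E > 0\<close> by simp
    finally show "dist (F q) (F p) < e"
      using est[OF \<open>q \<in> S\<close> \<open>p \<in> S\<close> \<open>x \<ge> 0\<close>] tail by (simp add: dist_real_def)
  qed (use \<open>e > 0\<close> \<open>E > 0\<close> in simp)
qed

section \<open>Profiles and their decay\<close>

lemma C1_realD:
  assumes "C1_real f"
  shows "(f has_real_derivative deriv f x) (at x)" and "continuous_on UNIV (deriv f)"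
    and "isCont f x"
  using assms unfolding C1_real_def
  by (auto simp: DERIV_deriv_iff_real_differentiable differentiable_imp_continuous_within)

definition dafermos_profile ::
    "(real \<Rightarrow> real) \<Rightarrow> real \<Rightarrow> real \<Rightarrow> real \<Rightarrow> (real \<Rightarrow> real) \<Rightarrow> bool" where
  "dafermos_profile f \<epsilon> uL uR u \<longleftrightarrow> C2_real u
     \<and> (\<forall>\<xi>. \<epsilon> * deriv (deriv u) \<xi> = (deriv f (u \<xi>) - \<xi>) * deriv u \<xi>)
     \<and> (u \<longlongrightarrow> uL) at_bot \<and> (u \<longlongrightarrow> uR) at_top"

lemma dafermos_profileD:
  assumes "dafermos_profile f \<epsilon> uL uR u"
  shows "(u has_real_derivative deriv u x) (at x)"
    and "(deriv u has_real_derivative deriv (deriv u) x) (at x)"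
    and "\<epsilon> * deriv (deriv u) x = (deriv f (u x) - x) * deriv u x"
    and "(u \<longlongrightarrow> uL) at_bot" and "(u \<longlongrightarrow> uR) at_top"
    and "continuous_on UNIV u"
  using assms unfolding dafermos_profile_def C2_real_def
  by (auto simp: DERIV_deriv_iff_real_differentiable differentiable_imp_continuous_within
      continuous_at_imp_continuous_on)

text \<open>Along a solution of \<open>\<epsilon> w' = (a(t) - t) w\<close> with \<open>\<bar>a\<bar> \<le> M\<close>, the quantity
  \<open>w(t)\<^sup>2 exp ((t\<^sup>2 - 2 M t) / \<epsilon>)\<close> is nonincreasing for \<open>t \<ge> 0\<close>.\<close>
lemma linear_ode_exp_decay_nonneg:
  fixes w w' a :: "real \<Rightarrow> real"
  assumes w: "\<And>t. (w has_real_derivative w' t) (at t)"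
    and ode: "\<And>t. \<epsilon> * w' t = (a t - t) * w t"
    and a_le: "\<And>t. \<bar>a t\<bar> \<le> M" and "\<epsilon> > 0" and "0 \<le> x"
  shows "\<bar>w x\<bar> \<le> \<bar>w 0\<bar> * exp ((M + \<epsilon>)\<^sup>2 / (2 * \<epsilon>)) * exp (- x)"
proof -
  define E where "E t = exp ((t\<^sup>2 - 2 * M * t) / \<epsilon>)" for t
  have w_ode: "(w has_real_derivative (a t - t) * w t / \<epsilon>) (at t)" for t
  proof -
    have "w' t = (a t - t) * w t / \<epsilon>"
      using ode[of t] \<open>\<epsilon> > 0\<close> by (simp add: field_simps)
    then show ?thesis
      using w[of t] by simp
  qed
  have "(w x)\<^sup>2 * E x \<le> (w 0)\<^sup>2 * E 0"
  proof (rule DERIV_nonpos_imp_nonincreasing[where f = "\<lambda>t. (w t)\<^sup>2 * E t", OF \<open>0 \<le> x\<close>])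
    fix t
    have "((\<lambda>t. (w t)\<^sup>2 * E t) has_real_derivative 2 * (w t)\<^sup>2 * (a t - M) / \<epsilon> * E t) (at t)"
      unfolding E_def using \<open>\<epsilon> > 0\<close>
      by (auto intro!: derivative_eq_intros w_ode simp: field_simps power2_eq_square)
    moreover have "2 * (w t)\<^sup>2 * (a t - M) / \<epsilon> * E t \<le> 0"
      using a_le[of t] \<open>\<epsilon> > 0\<close> by (auto simp: E_def mult_le_0_iff divide_le_0_iff)
    ultimately show "\<exists>y. ((\<lambda>t. (w t)\<^sup>2 * E t) has_real_derivative y) (at t) \<and> y \<le> 0"
      by blast
  qed
  then have "(w x)\<^sup>2 \<le> (w 0)\<^sup>2 / E x"
    by (simp add: E_def pos_le_divide_eq)
  also have "\<dots> = (w 0)\<^sup>2 * exp ((2 * M * x - x\<^sup>2) / \<epsilon>)"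
    by (simp add: E_def divide_inverse flip: exp_minus) (simp add: algebra_simps)
  also have "\<dots> \<le> (w 0)\<^sup>2 * exp (2 * ((M + \<epsilon>)\<^sup>2 / (2 * \<epsilon>) - x))"
  proof -
    have "2 * M * x - x\<^sup>2 \<le> (M + \<epsilon>)\<^sup>2 - 2 * \<epsilon> * x"
      using zero_le_power2[of "M + \<epsilon> - x"] by (simp add: power2_eq_square algebra_simps)
    then have "(2 * M * x - x\<^sup>2) / \<epsilon> \<le> ((M + \<epsilon>)\<^sup>2 - 2 * \<epsilon> * x) / \<epsilon>"
      using \<open>\<epsilon> > 0\<close> by (rule divide_right_mono[OF _ less_imp_le])
    also have "\<dots> = 2 * ((M + \<epsilon>)\<^sup>2 / (2 * \<epsilon>) - x)"
      using \<open>\<epsilon> > 0\<close> by (simp add: field_simps)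
    finally show ?thesis
      by (intro mult_left_mono) auto
  qed
  also have "\<dots> = (\<bar>w 0\<bar> * exp ((M + \<epsilon>)\<^sup>2 / (2 * \<epsilon>)) * exp (- x))\<^sup>2"
    by (simp add: power_mult_distrib exp_double[symmetric] flip: exp_add)
  finally show ?thesis
    using power2_le_imp_le[of "\<bar>w x\<bar>"] by simp
qed

text \<open>The equation is invariant under \<open>w(t) \<mapsto> w(-t)\<close>, \<open>a(t) \<mapsto> -a(-t)\<close>.\<close>
lemma linear_ode_exp_decay:
  fixes w w' a :: "real \<Rightarrow> real"
  assumes w: "\<And>t. (w has_real_derivative w' t) (at t)"
    and ode: "\<And>t. \<epsilon> * w' t = (a t - t) * w t"
    and a_le: "\<And>t. \<bar>a t\<bar> \<le> M" and "\<epsilon> > 0"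
  shows "\<bar>w x\<bar> \<le> \<bar>w 0\<bar> * exp ((M + \<epsilon>)\<^sup>2 / (2 * \<epsilon>)) * exp (- \<bar>x\<bar>)"
proof (cases "0 \<le> x")
  case True
  then show ?thesis
    using linear_ode_exp_decay_nonneg[OF w ode a_le \<open>\<epsilon> > 0\<close>] by simp
next
  case False
  have "\<bar>w (- (- x))\<bar> \<le> \<bar>w (- 0)\<bar> * exp ((M + \<epsilon>)\<^sup>2 / (2 * \<epsilon>)) * exp (- (- x))"
  proof (rule linear_ode_exp_decay_nonneg[where w = "\<lambda>t. w (- t)" and a = "\<lambda>t. - a (- t)"])
    show "((\<lambda>t. w (- t)) has_real_derivative - w' (- t)) (at t)" for t
      using DERIV_chain2[OF w[of "- t"] DERIV_minus[OF DERIV_ident]] by simp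
    show "\<epsilon> * - w' (- t) = (- a (- t) - t) * w (- t)" for t
      using ode[of "- t"] by (simp add: algebra_simps)
  qed (use a_le \<open>\<epsilon> > 0\<close> False in auto)
  then show ?thesis
    using False by simp
qed

lemma abs_diff_limit_le_at_top:
  fixes u u' :: "real \<Rightarrow> real"
  assumes u: "\<And>t. (u has_real_derivative u' t) (at t)"
    and u'_le: "\<And>t. t \<ge> x \<Longrightarrow> \<bar>u' t\<bar> \<le> C * exp (- t)"
    and lim: "(u \<longlongrightarrow> l) at_top"
  shows "\<bar>u x - l\<bar> \<le> C * exp (- x)"
proof -
  have "\<sigma> * (u x - l) \<le> C * exp (- x)" if "\<bar>\<sigma>\<bar> = 1" for \<sigma>
  proof -
    have mono: "\<sigma> * u x - C * exp (- x) \<le> \<sigma> * u t - C * exp (- t)" if "x \<le> t" for t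
    proof (rule DERIV_nonneg_imp_nondecreasing[OF that])
      fix s assume "x \<le> s"
      then have "0 \<le> \<sigma> * u' s + C * exp (- s)"
        using u'_le[of s] \<open>\<bar>\<sigma>\<bar> = 1\<close> by (auto simp: abs_if split: if_splits)
      then show "\<exists>y. ((\<lambda>t. \<sigma> * u t - C * exp (- t)) has_real_derivative y) (at s) \<and> 0 \<le> y"
        by (intro exI[of _ "\<sigma> * u' s + C * exp (- s)"]) (auto intro!: derivative_eq_intros u)
    qed
    have "((\<lambda>t. \<sigma> * u t - C * exp (- t)) \<longlongrightarrow> \<sigma> * l - C * 0) at_top"
      by (intro tendsto_intros lim) real_asymp
    then have "\<sigma> * u x - C * exp (- x) \<le> \<sigma> * l"
      using mono by (intro tendsto_lowerbound)
        (auto simp: eventually_at_top_linorder intro!: exI[of _ x])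
    then show ?thesis
      by (simp add: algebra_simps)
  qed
  from this[of 1] this[of "-1"] show ?thesis
    by simp
qed

lemma abs_diff_limit_le_at_bot:
  fixes u u' :: "real \<Rightarrow> real"
  assumes u: "\<And>t. (u has_real_derivative u' t) (at t)"
    and u'_le: "\<And>t. t \<le> x \<Longrightarrow> \<bar>u' t\<bar> \<le> C * exp t"
    and lim: "(u \<longlongrightarrow> l) at_bot"
  shows "\<bar>u x - l\<bar> \<le> C * exp x"
proof -
  have "\<bar>u (- (- x)) - l\<bar> \<le> C * exp (- (- x))"
  proof (rule abs_diff_limit_le_at_top[where u = "\<lambda>t. u (- t)" and u' = "\<lambda>t. - u' (- t)"])
    show "((\<lambda>t. u (- t)) has_real_derivative - u' (- t)) (at t)" for t
      using DERIV_chain2[OF u[of "- t"] DERIV_minus[OF DERIV_ident]] by simp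
    show "((\<lambda>t. u (- t)) \<longlongrightarrow> l) at_top"
      using filterlim_compose[OF lim filterlim_uminus_at_bot_at_top] by simp
  qed (use u'_le in auto)
  then show ?thesis
    by simp
qed

lemma dafermos_profile_decay:
  assumes f: "C1_real f" and "\<epsilon> > 0" and u: "dafermos_profile f \<epsilon> uL uR u"
  shows "(deriv u \<longlongrightarrow> 0) at_top" and "(deriv u \<longlongrightarrow> 0) at_bot"
    and "((\<lambda>x. x * (u x - uR)) \<longlongrightarrow> 0) at_top" and "((\<lambda>x. x * (u x - uL)) \<longlongrightarrow> 0) at_bot"
proof -
  note u_props = dafermos_profileD[OF u]
  obtain R where R: "\<And>x. \<bar>u x\<bar> \<le> R"
    using bounded_if_tendsto_at_bot_at_top u_props(6,4,5) by metis
  have "bounded (deriv f ` {-R..R})"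
    by (intro compact_imp_bounded compact_continuous_image
        continuous_on_subset[OF C1_realD(2)[OF f]]) auto
  then obtain M where M: "\<And>v. v \<in> {-R..R} \<Longrightarrow> \<bar>deriv f v\<bar> \<le> M"
    unfolding bounded_iff by (auto simp del: atLeastAtMost_iff)
  define C where "C = \<bar>deriv u 0\<bar> * exp ((M + \<epsilon>)\<^sup>2 / (2 * \<epsilon>))"
  have u'_le: "\<bar>deriv u x\<bar> \<le> C * exp (- \<bar>x\<bar>)" for x
    unfolding C_def
  proof (rule linear_ode_exp_decay[where a = "\<lambda>t. deriv f (u t)"])
    show "\<bar>deriv f (u t)\<bar> \<le> M" for t
      using M R[of t] by (simp add: abs_le_iff)
  qed (use u_props \<open>\<epsilon> > 0\<close> in auto)
  show "(deriv u \<longlongrightarrow> 0) at_top" "(deriv u \<longlongrightarrow> 0) at_bot"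
    by (rule Lim_null_comparison[where g = "\<lambda>x. C * exp (- \<bar>x\<bar>)"], use u'_le in simp, real_asymp)+
  have "\<bar>u x - uR\<bar> \<le> C * exp (- x)" if "0 \<le> x" for x
  proof (rule abs_diff_limit_le_at_top[OF u_props(1) _ u_props(5)])
    fix t assume "x \<le> t"
    then show "\<bar>deriv u t\<bar> \<le> C * exp (- t)"
      using u'_le[of t] that by simp
  qed
  then have "\<forall>\<^sub>F x in at_top. norm (x * (u x - uR)) \<le> C * (x * exp (- x))"
    unfolding eventually_at_top_linorder
    by (intro exI[of _ 0]) (auto simp: abs_mult mult_left_mono mult.left_commute)
  then show "((\<lambda>x. x * (u x - uR)) \<longlongrightarrow> 0) at_top"
    by (rule Lim_null_comparison) real_asymp
  have "\<bar>u x - uL\<bar> \<le> C * exp x" if "x \<le> 0" for x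
  proof (rule abs_diff_limit_le_at_bot[OF u_props(1) _ u_props(4)])
    fix t assume "t \<le> x"
    then show "\<bar>deriv u t\<bar> \<le> C * exp t"
      using u'_le[of t] that by simp
  qed
  then have "\<forall>\<^sub>F x in at_bot. norm (x * (u x - uL)) \<le> C * (- x * exp x)"
    unfolding eventually_at_bot_linorder
    by (intro exI[of _ 0]) (auto simp: abs_mult abs_of_nonpos mult_left_mono_neg mult.left_commute)
  then show "((\<lambda>x. x * (u x - uL)) \<longlongrightarrow> 0) at_bot"
    by (rule Lim_null_comparison) real_asymp
qed

section \<open>Uniqueness\<close>

definition flux :: "(real \<Rightarrow> real) \<Rightarrow> real \<Rightarrow> (real \<Rightarrow> real) \<Rightarrow> real \<Rightarrow> real" where
  "flux f \<epsilon> u x = \<epsilon> * deriv u x + x * u x - f (u x)"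

lemma has_real_derivative_flux:
  assumes f: "C1_real f" and u: "dafermos_profile f \<epsilon> uL uR u"
  shows "(flux f \<epsilon> u has_real_derivative u x) (at x)"
proof -
  note u_props = dafermos_profileD[OF u]
  have "(flux f \<epsilon> u has_real_derivative
      \<epsilon> * deriv (deriv u) x + (u x + x * deriv u x) - deriv f (u x) * deriv u x) (at x)"
    unfolding flux_def[abs_def]
    by (rule derivative_eq_intros DERIV_chain2[OF C1_realD(1)[OF f]] u_props(1,2) refl)+
      (simp add: algebra_simps)
  then show ?thesis
    using u_props(3)[of x] by (simp add: algebra_simps)
qed

lemma flux_diff_tendsto_0:
  assumes f: "C1_real f" and "\<epsilon> > 0"
    and u: "dafermos_profile f \<epsilon> uL uR u" and v: "dafermos_profile f \<epsilon> uL uR v"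
  shows "((\<lambda>x. flux f \<epsilon> u x - flux f \<epsilon> v x) \<longlongrightarrow> 0) at_top"
    and "((\<lambda>x. flux f \<epsilon> u x - flux f \<epsilon> v x) \<longlongrightarrow> 0) at_bot"
proof -
  note decay = dafermos_profile_decay[OF f \<open>\<epsilon> > 0\<close>]
  have eq: "(\<lambda>x. flux f \<epsilon> u x - flux f \<epsilon> v x) = (\<lambda>x. \<epsilon> * (deriv u x - deriv v x)
      + (x * (u x - c) - x * (v x - c)) - (f (u x) - f (v x)))" for c
    by (simp add: flux_def algebra_simps)
  have "((\<lambda>x. \<epsilon> * (deriv u x - deriv v x) + (x * (u x - uR) - x * (v x - uR))
      - (f (u x) - f (v x))) \<longlongrightarrow> \<epsilon> * (0 - 0) + (0 - 0) - (f uR - f uR)) at_top"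
    by (intro tendsto_intros decay[OF u] decay[OF v] isCont_tendsto_compose[OF C1_realD(3)[OF f]]
        dafermos_profileD(5)[OF u] dafermos_profileD(5)[OF v])
  then show "((\<lambda>x. flux f \<epsilon> u x - flux f \<epsilon> v x) \<longlongrightarrow> 0) at_top"
    unfolding eq[of uR] by simp
  have "((\<lambda>x. \<epsilon> * (deriv u x - deriv v x) + (x * (u x - uL) - x * (v x - uL))
      - (f (u x) - f (v x))) \<longlongrightarrow> \<epsilon> * (0 - 0) + (0 - 0) - (f uL - f uL)) at_bot"
    by (intro tendsto_intros decay[OF u] decay[OF v] isCont_tendsto_compose[OF C1_realD(3)[OF f]]
        dafermos_profileD(4)[OF u] dafermos_profileD(4)[OF v])
  then show "((\<lambda>x. flux f \<epsilon> u x - flux f \<epsilon> v x) \<longlongrightarrow> 0) at_bot"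
    unfolding eq[of uL] by simp
qed

lemma flux_le:
  assumes f: "C1_real f" and "\<epsilon> > 0"
    and u: "dafermos_profile f \<epsilon> uL uR u" and v: "dafermos_profile f \<epsilon> uL uR v"
  shows "flux f \<epsilon> u x \<le> flux f \<epsilon> v x"
proof (rule ccontr)
  define H where "H x = flux f \<epsilon> u x - flux f \<epsilon> v x" for x
  define W where "W x = u x - v x" for x
  assume "\<not> ?thesis"
  then have "H x > 0"
    by (simp add: H_def)
  have H': "(H has_real_derivative W t) (at t)" for t
    unfolding H_def[abs_def] W_def
    by (intro derivative_intros has_real_derivative_flux[OF f u] has_real_derivative_flux[OF f v])
  have W': "(W has_real_derivative deriv u t - deriv v t) (at t)" for t
    unfolding W_def[abs_def]
    by (intro derivative_intros dafermos_profileD(1)[OF u] dafermos_profileD(1)[OF v])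
  have "continuous_on UNIV H"
    using H' by (meson DERIV_continuous continuous_at_imp_continuous_on)
  moreover have "(H \<longlongrightarrow> 0) at_bot" and "(H \<longlongrightarrow> 0) at_top"
    using flux_diff_tendsto_0[OF f \<open>\<epsilon> > 0\<close> u v] by (simp_all add: H_def[abs_def])
  ultimately obtain x0 where x0: "\<And>y. H y \<le> H x0"
    using continuous_attains_max_if_tendsto_0 \<open>H x > 0\<close> by blast
  have "W x0 = 0"
    using DERIV_local_max[OF H', of 1 x0] x0 by auto
  then have "\<epsilon> * (deriv u x0 - deriv v x0) = H x0"
    by (simp add: H_def W_def flux_def algebra_simps)
  moreover have "H x0 > 0"
    using x0[of x] \<open>H x > 0\<close> by simp
  ultimately have "0 < \<epsilon> * (deriv u x0 - deriv v x0)"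
    by simp
  then have "deriv u x0 - deriv v x0 > 0"
    using \<open>\<epsilon> > 0\<close> zero_less_mult_pos by blast
  then obtain d where "d > 0" and W_pos: "\<And>h. 0 < h \<Longrightarrow> h < d \<Longrightarrow> W x0 < W (x0 + h)"
    using DERIV_pos_inc_right[OF W'] by blast
  obtain z where z: "x0 < z" "z < x0 + d / 2" and "H (x0 + d / 2) - H x0 = (x0 + d / 2 - x0) * W z"
    using MVT2[of x0 "x0 + d / 2" H W] H' \<open>d > 0\<close> by auto
  moreover have "W z > 0"
    using W_pos[of "z - x0"] z \<open>W x0 = 0\<close> by auto
  then have "(x0 + d / 2 - x0) * W z > 0"
    using \<open>d > 0\<close> by simp
  ultimately have "H (x0 + d / 2) > H x0"
    by linarith
  then show False
    using x0[of "x0 + d / 2"] by simp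
qed

theorem dafermos_profile_unique:
  assumes f: "C1_real f" and "\<epsilon> > 0"
    and u: "dafermos_profile f \<epsilon> uL uR u" and v: "dafermos_profile f \<epsilon> uL uR v"
  shows "u = v"
proof
  fix x
  have "flux f \<epsilon> u y = flux f \<epsilon> v y" for y
    using flux_le[OF f \<open>\<epsilon> > 0\<close> u v] flux_le[OF f \<open>\<epsilon> > 0\<close> v u]
    by (meson order.antisym)
  then have "((\<lambda>y. flux f \<epsilon> u y - flux f \<epsilon> v y) has_real_derivative 0) (at x)"
    by simp
  moreover have "((\<lambda>y. flux f \<epsilon> u y - flux f \<epsilon> v y) has_real_derivative u x - v x) (at x)"
    by (intro derivative_intros has_real_derivative_flux[OF f u] has_real_derivative_flux[OF f v])
  ultimately show "u x = v x"
    using DERIV_unique by fastforce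
qed

section \<open>Construction of increasing profiles\<close>

text \<open>For a bounded, Lipschitz continuous speed \<open>g\<close>, every solution of
  \<open>u = \<alpha> + \<beta> \<integral>\<^sub>0\<^sup>x density u\<close> solves \<open>\<epsilon> u'' = (g(u) - x) u'\<close>. Such solutions are obtained as fixed
  points of a Picard map on bounded continuous functions \<open>w\<close>, where \<open>u(x) = exp (lam \<bar>x\<bar>) w(x)\<close>;
  the rate \<open>lam\<close> is chosen so that the map halves distances whenever \<open>\<bar>\<beta>\<bar> \<le> B\<close>.\<close>
locale profile_construction =
  fixes g :: "real \<Rightarrow> real" and M K \<epsilon> B :: real
  assumes continuous_g: "continuous_on UNIV g" and g_bounded: "\<And>x. \<bar>g x\<bar> \<le> M"
    and g_lipschitz: "\<And>x y. \<bar>g x - g y\<bar> \<le> K * \<bar>x - y\<bar>"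
    and K_nonneg: "K \<ge> 0" and eps_pos: "\<epsilon> > 0" and B_pos: "B > 0"
begin

definition potential :: "(real \<Rightarrow> real) \<Rightarrow> real \<Rightarrow> real" where
  "potential u s = primitive (\<lambda>t. g (u t)) s - s\<^sup>2 / 2"

definition density :: "(real \<Rightarrow> real) \<Rightarrow> real \<Rightarrow> real" where
  "density u s = exp (potential u s / \<epsilon>)"

definition C0 :: real where
  "C0 = exp ((M + \<epsilon>)\<^sup>2 / (2 * \<epsilon>))"

definition c1 :: real where
  "c1 = exp (- (M + 1) / \<epsilon>)"

definition lam :: real where
  "lam = 2 * B * C0 * K / \<epsilon> + 2"

definition unweighted :: "(real \<Rightarrow>\<^sub>C real) \<Rightarrow> real \<Rightarrow> real" where
  "unweighted w x = exp (lam * \<bar>x\<bar>) * w x"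

definition picard_fun :: "real \<Rightarrow> real \<Rightarrow> (real \<Rightarrow>\<^sub>C real) \<Rightarrow> real \<Rightarrow> real" where
  "picard_fun \<alpha> \<beta> w x = exp (- lam * \<bar>x\<bar>) * (\<alpha> + \<beta> * primitive (density (unweighted w)) x)"

definition picard :: "real \<Rightarrow> real \<Rightarrow> (real \<Rightarrow>\<^sub>C real) \<Rightarrow> (real \<Rightarrow>\<^sub>C real)" where
  "picard \<alpha> \<beta> w = Bcontfun (picard_fun \<alpha> \<beta> w)"

definition fixpoint :: "real \<Rightarrow> real \<Rightarrow> (real \<Rightarrow>\<^sub>C real)" where
  "fixpoint \<alpha> \<beta> = (THE w. picard \<alpha> \<beta> w = w)"

definition profile :: "real \<Rightarrow> real \<Rightarrow> real \<Rightarrow> real" where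
  "profile \<alpha> \<beta> = unweighted (fixpoint \<alpha> \<beta>)"

definition profile_top :: "real \<Rightarrow> real \<Rightarrow> real" where
  "profile_top \<alpha> \<beta> = Sup (range (profile \<alpha> \<beta>))"

definition profile_bot :: "real \<Rightarrow> real \<Rightarrow> real" where
  "profile_bot \<alpha> \<beta> = Inf (range (profile \<alpha> \<beta>))"

lemma M_nonneg: "M \<ge> 0"
  using g_bounded[of 0] by auto

lemma C0_pos: "C0 > 0"
  by (simp add: C0_def)

lemma c1_pos: "c1 > 0"
  by (simp add: c1_def)

lemma c1_le_C0: "c1 \<le> C0"
proof -
  have "c1 \<le> 1"
    using M_nonneg eps_pos by (simp add: c1_def divide_nonpos_pos)
  also have "1 \<le> C0"
    using eps_pos by (simp add: C0_def)
  finally show ?thesis .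
qed

lemma lam_ge_2: "lam \<ge> 2"
  unfolding lam_def using B_pos C0_pos K_nonneg eps_pos by simp

lemma continuous_on_g_comp: "continuous_on UNIV u \<Longrightarrow> continuous_on UNIV (\<lambda>t. g (u t))"
  by (rule continuous_on_compose2[OF continuous_g]) auto

lemma has_real_derivative_density:
  assumes "continuous_on UNIV u"
  shows "(density u has_real_derivative density u s * ((g (u s) - s) / \<epsilon>)) (at s)"
  unfolding density_def potential_def using eps_pos
  by (auto intro!: derivative_eq_intros has_real_derivative_primitive continuous_on_g_comp assms)

lemma continuous_on_density: "continuous_on UNIV u \<Longrightarrow> continuous_on UNIV (density u)"
  using has_real_derivative_density by (meson DERIV_continuous continuous_at_imp_continuous_on)

lemma density_pos: "density u s > 0"
  by (simp add: density_def)

lemma abs_primitive_g_comp_le: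
  assumes "continuous_on UNIV u"
  shows "\<bar>primitive (\<lambda>t. g (u t)) s\<bar> \<le> M * \<bar>s\<bar>"
  by (rule abs_le_if_derivative_le_majorant[where F' = "\<lambda>t. g (u t)" and q = "\<lambda>t. M"])
    (auto intro!: has_real_derivative_primitive continuous_on_g_comp assms derivative_eq_intros
      g_bounded)

lemma density_le:
  assumes "continuous_on UNIV u"
  shows "density u s \<le> C0 * exp (- \<bar>s\<bar>)"
proof -
  have "potential u s \<le> M * \<bar>s\<bar> - s\<^sup>2 / 2"
    using abs_primitive_g_comp_le[OF assms, of s] by (simp add: potential_def)
  also have "\<dots> \<le> (M + \<epsilon>)\<^sup>2 / 2 - \<epsilon> * \<bar>s\<bar>"
    using zero_le_power2[of "M + \<epsilon> - \<bar>s\<bar>"] by (simp add: power2_eq_square algebra_simps)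
  finally have "potential u s / \<epsilon> \<le> ((M + \<epsilon>)\<^sup>2 / 2 - \<epsilon> * \<bar>s\<bar>) / \<epsilon>"
    using eps_pos by (simp add: divide_right_mono)
  also have "\<dots> = (M + \<epsilon>)\<^sup>2 / (2 * \<epsilon>) + - \<bar>s\<bar>"
    using eps_pos by (simp add: field_simps)
  finally show ?thesis
    unfolding density_def C0_def by (simp flip: exp_add)
qed

lemma density_ge:
  assumes "continuous_on UNIV u" and "\<bar>s\<bar> \<le> 1"
  shows "c1 \<le> density u s"
proof -
  have "s\<^sup>2 \<le> 1" and "M * \<bar>s\<bar> \<le> M"
    using assms(2) M_nonneg abs_square_le_1 by (auto simp: mult_left_le)
  then have "- (M + 1) \<le> potential u s"
    using abs_primitive_g_comp_le[OF assms(1), of s] by (simp add: potential_def)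
  then have "- (M + 1) / \<epsilon> \<le> potential u s / \<epsilon>"
    using eps_pos by (simp add: divide_right_mono)
  then show ?thesis
    unfolding density_def c1_def by simp
qed

lemma abs_primitive_density_le:
  assumes "continuous_on UNIV u"
  shows "\<bar>primitive (density u) x\<bar> \<le> C0"
proof -
  have "\<bar>primitive (density u) x\<bar> \<le> C0 * (1 - exp (- \<bar>x\<bar>))"
  proof (rule abs_le_if_derivative_le_majorant[where F' = "density u" and q = "\<lambda>t. C0 * exp (- t)"
        and Q = "\<lambda>t. C0 * (1 - exp (- t))"])
    show "\<bar>density u t\<bar> \<le> C0 * exp (- \<bar>t\<bar>)" for t
      using density_le[OF assms, of t] density_pos[of u t] by simp
  qed (auto intro!: derivative_eq_intros has_real_derivative_primitive continuous_on_density assms)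
  also have "\<dots> \<le> C0"
    using C0_pos by (simp add: mult_left_le)
  finally show ?thesis .
qed

lemma continuous_on_unweighted: "continuous_on UNIV (unweighted w)"
  unfolding unweighted_def by (intro continuous_intros) auto

lemma apply_picard: "apply_bcontfun (picard \<alpha> \<beta> w) = picard_fun \<alpha> \<beta> w"
proof -
  have "\<bar>picard_fun \<alpha> \<beta> w x\<bar> \<le> \<bar>\<alpha>\<bar> + \<bar>\<beta>\<bar> * C0" for x
  proof -
    have "\<bar>picard_fun \<alpha> \<beta> w x\<bar> \<le> 1 * \<bar>\<alpha> + \<beta> * primitive (density (unweighted w)) x\<bar>"
      unfolding picard_fun_def abs_mult using lam_ge_2 by (intro mult_right_mono) auto
    also have "\<dots> \<le> \<bar>\<alpha>\<bar> + \<bar>\<beta>\<bar> * \<bar>primitive (density (unweighted w)) x\<bar>"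
      by (simp add: abs_mult[symmetric] abs_triangle_ineq)
    also have "\<dots> \<le> \<bar>\<alpha>\<bar> + \<bar>\<beta>\<bar> * C0"
      using abs_primitive_density_le[OF continuous_on_unweighted] by (simp add: mult_left_mono)
    finally show ?thesis .
  qed
  moreover have "continuous_on UNIV (picard_fun \<alpha> \<beta> w)"
    unfolding picard_fun_def
    by (intro continuous_intros continuous_on_primitive continuous_on_density
        continuous_on_unweighted)
  ultimately have "picard_fun \<alpha> \<beta> w \<in> bcontfun"
    unfolding bcontfun_def by (auto simp: bounded_iff)
  then show ?thesis
    unfolding picard_def by (simp add: Bcontfun_inverse)
qed

lemma abs_unweighted_diff_le: "\<bar>unweighted w x - unweighted v x\<bar> \<le> exp (lam * \<bar>x\<bar>) * dist w v"
proof -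
  have "\<bar>unweighted w x - unweighted v x\<bar> = exp (lam * \<bar>x\<bar>) * dist (w x) (v x)"
    by (simp add: unweighted_def dist_real_def abs_mult flip: right_diff_distrib)
  also have "\<dots> \<le> exp (lam * \<bar>x\<bar>) * dist w v"
    by (intro mult_left_mono dist_bounded) auto
  finally show ?thesis .
qed

lemma abs_primitive_g_comp_diff_le:
  "\<bar>primitive (\<lambda>t. g (unweighted w t)) s - primitive (\<lambda>t. g (unweighted v t)) s\<bar>
    \<le> K * dist w v * exp (lam * \<bar>s\<bar>) / lam"
proof -
  have "lam > 0"
    using lam_ge_2 by simp
  have "\<bar>primitive (\<lambda>t. g (unweighted w t)) s - primitive (\<lambda>t. g (unweighted v t)) s\<bar>
      \<le> K * dist w v * (exp (lam * \<bar>s\<bar>) - 1) / lam"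
  proof (rule abs_le_if_derivative_le_majorant[where
        F' = "\<lambda>t. g (unweighted w t) - g (unweighted v t)" and
        q = "\<lambda>t. K * dist w v * exp (lam * t)" and
        Q = "\<lambda>t. K * dist w v * (exp (lam * t) - 1) / lam"])
    show "\<bar>g (unweighted w t) - g (unweighted v t)\<bar> \<le> K * dist w v * exp (lam * \<bar>t\<bar>)" for t
      using g_lipschitz[of "unweighted w t" "unweighted v t"]
        mult_left_mono[OF abs_unweighted_diff_le K_nonneg, of w t v]
      by (simp add: algebra_simps)
  qed (use \<open>lam > 0\<close> in \<open>auto intro!: derivative_eq_intros has_real_derivative_primitive
      continuous_on_g_comp continuous_on_unweighted\<close>)
  also have "\<dots> \<le> K * dist w v * exp (lam * \<bar>s\<bar>) / lam"
    using \<open>lam > 0\<close> K_nonneg by (intro divide_right_mono mult_left_mono) auto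
  finally show ?thesis .
qed

lemma abs_density_diff_le:
  "\<bar>density (unweighted w) s - density (unweighted v) s\<bar>
    \<le> C0 * K * dist w v / (\<epsilon> * lam) * exp ((lam - 1) * \<bar>s\<bar>)"
proof -
  have "\<bar>density (unweighted w) s - density (unweighted v) s\<bar>
      \<le> max (density (unweighted w) s) (density (unweighted v) s)
        * \<bar>potential (unweighted w) s / \<epsilon> - potential (unweighted v) s / \<epsilon>\<bar>"
    unfolding density_def by (rule abs_exp_diff_le)
  also have "\<dots> \<le> (C0 * exp (- \<bar>s\<bar>)) * (K * dist w v * exp (lam * \<bar>s\<bar>) / lam / \<epsilon>)"
  proof (rule mult_mono)
    show "max (density (unweighted w) s) (density (unweighted v) s) \<le> C0 * exp (- \<bar>s\<bar>)"
      using density_le[OF continuous_on_unweighted] by simp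
    have "\<bar>potential (unweighted w) s / \<epsilon> - potential (unweighted v) s / \<epsilon>\<bar>
        = \<bar>primitive (\<lambda>t. g (unweighted w t)) s - primitive (\<lambda>t. g (unweighted v t)) s\<bar> / \<epsilon>"
      using eps_pos by (simp add: potential_def flip: diff_divide_distrib)
    also have "\<dots> \<le> K * dist w v * exp (lam * \<bar>s\<bar>) / lam / \<epsilon>"
      using eps_pos by (intro divide_right_mono abs_primitive_g_comp_diff_le) auto
    finally show "\<bar>potential (unweighted w) s / \<epsilon> - potential (unweighted v) s / \<epsilon>\<bar>
        \<le> K * dist w v * exp (lam * \<bar>s\<bar>) / lam / \<epsilon>" .
  qed (use C0_pos in auto)
  also have "\<dots> = C0 * K * dist w v / (\<epsilon> * lam) * (exp (- \<bar>s\<bar>) * exp (lam * \<bar>s\<bar>))"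
    by (simp add: field_simps)
  also have "exp (- \<bar>s\<bar>) * exp (lam * \<bar>s\<bar>) = exp ((lam - 1) * \<bar>s\<bar>)"
    by (simp add: mult_exp_exp algebra_simps)
  finally show ?thesis .
qed

lemma abs_primitive_density_diff_le:
  "\<bar>primitive (density (unweighted w)) x - primitive (density (unweighted v)) x\<bar>
    \<le> C0 * K * dist w v / (\<epsilon> * lam) * exp ((lam - 1) * \<bar>x\<bar>)"
proof -
  define c where "c = C0 * K * dist w v / (\<epsilon> * lam)"
  have "c \<ge> 0"
    unfolding c_def using C0_pos K_nonneg eps_pos lam_ge_2 by simp
  have "lam - 1 \<ge> 1"
    using lam_ge_2 by simp
  have "\<bar>primitive (density (unweighted w)) x - primitive (density (unweighted v)) x\<bar>
      \<le> c * (exp ((lam - 1) * \<bar>x\<bar>) - 1) / (lam - 1)"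
  proof (rule abs_le_if_derivative_le_majorant[where q = "\<lambda>t. c * exp ((lam - 1) * t)"
        and F' = "\<lambda>t. density (unweighted w) t - density (unweighted v) t"
        and Q = "\<lambda>t. c * (exp ((lam - 1) * t) - 1) / (lam - 1)"])
    show "\<bar>density (unweighted w) t - density (unweighted v) t\<bar> \<le> c * exp ((lam - 1) * \<bar>t\<bar>)" for t
      unfolding c_def by (rule abs_density_diff_le)
  qed (use \<open>lam - 1 \<ge> 1\<close> in \<open>auto intro!: derivative_eq_intros has_real_derivative_primitive
      continuous_on_density continuous_on_unweighted\<close>)
  also have "\<dots> \<le> c * exp ((lam - 1) * \<bar>x\<bar>) / (lam - 1)"
    using \<open>lam - 1 \<ge> 1\<close> \<open>c \<ge> 0\<close> by (intro divide_right_mono mult_left_mono) auto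
  also have "\<dots> \<le> c * exp ((lam - 1) * \<bar>x\<bar>)"
  proof -
    have "c * exp ((lam - 1) * \<bar>x\<bar>) * 1 \<le> c * exp ((lam - 1) * \<bar>x\<bar>) * (lam - 1)"
      using \<open>lam - 1 \<ge> 1\<close> \<open>c \<ge> 0\<close> by (intro mult_left_mono) auto
    then show ?thesis
      using \<open>lam - 1 \<ge> 1\<close> by (simp add: divide_le_eq)
  qed
  finally show ?thesis
    unfolding c_def .
qed

lemma picard_contraction:
  assumes "\<bar>\<beta>\<bar> \<le> B"
  shows "dist (picard \<alpha> \<beta> w) (picard \<alpha> \<beta> v) \<le> 1/2 * dist w v"
proof (rule dist_bound)
  fix x
  define c where "c = C0 * K * dist w v / (\<epsilon> * lam)"
  have "lam > 0"
    using lam_ge_2 by simp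
  have "dist (picard \<alpha> \<beta> w x) (picard \<alpha> \<beta> v x)
      = exp (- lam * \<bar>x\<bar>) * \<bar>\<beta>\<bar>
        * \<bar>primitive (density (unweighted w)) x - primitive (density (unweighted v)) x\<bar>"
    by (simp add: apply_picard picard_fun_def dist_real_def abs_mult mult.assoc
        flip: right_diff_distrib)
  also have "\<dots> \<le> exp (- lam * \<bar>x\<bar>) * B * (c * exp ((lam - 1) * \<bar>x\<bar>))"
    unfolding c_def using assms by (intro mult_mono abs_primitive_density_diff_le) auto
  also have "\<dots> = B * c * exp (- \<bar>x\<bar>)"
    by (simp add: mult_exp_exp algebra_simps)
  also have "\<dots> \<le> B * c"
    using B_pos C0_pos K_nonneg eps_pos \<open>lam > 0\<close> unfolding c_def by (intro mult_left_le) auto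
  also have "\<dots> = (B * C0 * K / \<epsilon>) / lam * dist w v"
    unfolding c_def by (simp add: field_simps)
  also have "\<dots> \<le> 1/2 * dist w v"
  proof (rule mult_right_mono)
    have "B * C0 * K / \<epsilon> \<le> lam / 2"
      unfolding lam_def by (simp add: add_divide_distrib)
    then have "(B * C0 * K / \<epsilon>) / lam \<le> (lam / 2) / lam"
      using \<open>lam > 0\<close> by (intro divide_right_mono) auto
    then show "(B * C0 * K / \<epsilon>) / lam \<le> 1/2"
      using \<open>lam > 0\<close> by simp
  qed simp
  finally show "dist (picard \<alpha> \<beta> w x) (picard \<alpha> \<beta> v x) \<le> 1/2 * dist w v" .
qed

lemma picard_fixpoint:
  assumes "\<bar>\<beta>\<bar> \<le> B"
  shows "picard \<alpha> \<beta> (fixpoint \<alpha> \<beta>) = fixpoint \<alpha> \<beta>"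
  unfolding fixpoint_def
  by (rule theI', rule banach_fix_type[of "1/2"]) (use picard_contraction[OF assms] in auto)

lemma continuous_on_profile: "continuous_on UNIV (profile \<alpha> \<beta>)"
  unfolding profile_def by (rule continuous_on_unweighted)

lemma profile_eq:
  assumes "\<bar>\<beta>\<bar> \<le> B"
  shows "profile \<alpha> \<beta> x = \<alpha> + \<beta> * primitive (density (profile \<alpha> \<beta>)) x"
proof -
  have "fixpoint \<alpha> \<beta> x = picard_fun \<alpha> \<beta> (fixpoint \<alpha> \<beta>) x"
    using arg_cong[OF picard_fixpoint[OF assms], of "\<lambda>w. apply_bcontfun w x"]
    by (simp add: apply_picard)
  then have "profile \<alpha> \<beta> x
      = (exp (lam * \<bar>x\<bar>) * exp (- lam * \<bar>x\<bar>)) * (\<alpha> + \<beta> * primitive (density (profile \<alpha> \<beta>)) x)"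
    by (simp add: profile_def unweighted_def picard_fun_def)
  then show ?thesis
    by (simp add: mult_exp_exp)
qed

lemma has_real_derivative_profile:
  assumes "\<bar>\<beta>\<bar> \<le> B"
  shows "(profile \<alpha> \<beta> has_real_derivative \<beta> * density (profile \<alpha> \<beta>) x) (at x)"
proof -
  have "((\<lambda>x. \<alpha> + \<beta> * primitive (density (profile \<alpha> \<beta>)) x)
      has_real_derivative \<beta> * density (profile \<alpha> \<beta>) x) (at x)"
    by (auto intro!: derivative_eq_intros has_real_derivative_primitive continuous_on_density
        continuous_on_profile)
  then show ?thesis
    by (simp flip: profile_eq[OF assms])
qed

lemma dist_picard_params_le:
  "dist (picard \<alpha> \<beta> w) (picard \<alpha>' \<beta>' w) \<le> \<bar>\<alpha> - \<alpha>'\<bar> + \<bar>\<beta> - \<beta>'\<bar> * C0"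
proof (rule dist_bound)
  fix x
  let ?P = "primitive (density (unweighted w)) x"
  have "picard_fun \<alpha> \<beta> w x - picard_fun \<alpha>' \<beta>' w x = exp (- lam * \<bar>x\<bar>) * ((\<alpha> - \<alpha>') + (\<beta> - \<beta>') * ?P)"
    by (simp add: picard_fun_def algebra_simps)
  then have "dist (picard \<alpha> \<beta> w x) (picard \<alpha>' \<beta>' w x)
      = exp (- lam * \<bar>x\<bar>) * \<bar>(\<alpha> - \<alpha>') + (\<beta> - \<beta>') * ?P\<bar>"
    by (simp add: apply_picard dist_real_def abs_mult)
  also have "\<dots> \<le> 1 * \<bar>(\<alpha> - \<alpha>') + (\<beta> - \<beta>') * ?P\<bar>"
    using lam_ge_2 by (intro mult_right_mono) auto
  also have "\<dots> \<le> \<bar>\<alpha> - \<alpha>'\<bar> + \<bar>\<beta> - \<beta>'\<bar> * \<bar>?P\<bar>"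
    by (simp add: abs_mult[symmetric] abs_triangle_ineq)
  also have "\<dots> \<le> \<bar>\<alpha> - \<alpha>'\<bar> + \<bar>\<beta> - \<beta>'\<bar> * C0"
    using abs_primitive_density_le[OF continuous_on_unweighted] by (simp add: mult_left_mono)
  finally show "dist (picard \<alpha> \<beta> w x) (picard \<alpha>' \<beta>' w x) \<le> \<bar>\<alpha> - \<alpha>'\<bar> + \<bar>\<beta> - \<beta>'\<bar> * C0" .
qed

lemma dist_fixpoint_params_le:
  assumes "\<bar>\<beta>\<bar> \<le> B" and "\<bar>\<beta>'\<bar> \<le> B"
  shows "dist (fixpoint \<alpha> \<beta>) (fixpoint \<alpha>' \<beta>') \<le> 2 * (\<bar>\<alpha> - \<alpha>'\<bar> + \<bar>\<beta> - \<beta>'\<bar> * C0)"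
proof -
  let ?w = "fixpoint \<alpha> \<beta>" and ?v = "fixpoint \<alpha>' \<beta>'"
  have "dist ?w ?v = dist (picard \<alpha> \<beta> ?w) (picard \<alpha>' \<beta>' ?v)"
    using picard_fixpoint[OF assms(1)] picard_fixpoint[OF assms(2)] by simp
  also have "\<dots> \<le> dist (picard \<alpha> \<beta> ?w) (picard \<alpha> \<beta> ?v) + dist (picard \<alpha> \<beta> ?v) (picard \<alpha>' \<beta>' ?v)"
    by (rule dist_triangle)
  also have "\<dots> \<le> 1/2 * dist ?w ?v + (\<bar>\<alpha> - \<alpha>'\<bar> + \<bar>\<beta> - \<beta>'\<bar> * C0)"
    by (intro add_mono picard_contraction assms dist_picard_params_le)
  finally show ?thesis
    by simp
qed

lemma abs_profile_params_diff_le: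
  assumes "\<bar>snd p\<bar> \<le> B" and "\<bar>snd q\<bar> \<le> B"
  shows "\<bar>profile (fst p) (snd p) x - profile (fst q) (snd q) x\<bar>
    \<le> exp (lam * \<bar>x\<bar>) * (2 * (1 + C0)) * dist p q"
proof -
  have "\<bar>fst p - fst q\<bar> \<le> dist p q"
    using dist_fst_le[of p q] by (simp add: dist_real_def)
  moreover have "\<bar>snd p - snd q\<bar> * C0 \<le> dist p q * C0"
    using dist_snd_le[of p q] C0_pos by (intro mult_right_mono) (simp_all add: dist_real_def)
  ultimately have "dist (fixpoint (fst p) (snd p)) (fixpoint (fst q) (snd q))
      \<le> 2 * (1 + C0) * dist p q"
    using dist_fixpoint_params_le[OF assms, of "fst p" "fst q"] by (simp add: algebra_simps)
  then have "exp (lam * \<bar>x\<bar>) * dist (fixpoint (fst p) (snd p)) (fixpoint (fst q) (snd q))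
      \<le> exp (lam * \<bar>x\<bar>) * (2 * (1 + C0) * dist p q)"
    by (rule mult_left_mono) simp
  then show ?thesis
    unfolding profile_def using abs_unweighted_diff_le by (smt (verit) mult.assoc)
qed

lemma C2_real_profile_and_ode:
  assumes "\<bar>\<beta>\<bar> \<le> B"
  shows "C2_real (profile \<alpha> \<beta>)"
    and "\<epsilon> * deriv (deriv (profile \<alpha> \<beta>)) x = (g (profile \<alpha> \<beta> x) - x) * deriv (profile \<alpha> \<beta>) x"
proof -
  let ?u = "profile \<alpha> \<beta>"
  have u': "deriv ?u = (\<lambda>x. \<beta> * density ?u x)"
    using has_real_derivative_profile[OF assms] by (auto intro!: DERIV_imp_deriv)
  have u'': "((\<lambda>x. \<beta> * density ?u x)
      has_real_derivative \<beta> * (density ?u x * ((g (?u x) - x) / \<epsilon>))) (at x)" for x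
    by (intro DERIV_cmult has_real_derivative_density continuous_on_profile)
  then have u''_eq: "deriv (deriv ?u) = (\<lambda>x. \<beta> * (density ?u x * ((g (?u x) - x) / \<epsilon>)))"
    unfolding u' by (auto intro!: DERIV_imp_deriv)
  show "C2_real ?u"
    unfolding C2_real_def
  proof (intro conjI allI)
    show "?u differentiable at x" for x
      using has_real_derivative_profile[OF assms] real_differentiable_def by blast
    show "deriv ?u differentiable at x" for x
      unfolding u' using u'' real_differentiable_def by blast
    show "continuous_on UNIV (deriv (deriv ?u))"
      unfolding u''_eq using eps_pos
      by (intro continuous_intros continuous_on_density continuous_on_profile continuous_on_g_comp)
        auto
  qed
  have "deriv (deriv ?u) x = \<beta> * (density ?u x * ((g (?u x) - x) / \<epsilon>))"
    by (simp only: u''_eq)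
  moreover have "deriv ?u x = \<beta> * density ?u x"
    by (simp only: u')
  ultimately show "\<epsilon> * deriv (deriv ?u) x = (g (?u x) - x) * deriv ?u x"
    using eps_pos by (simp add: field_simps)
qed

context
  fixes \<alpha> \<beta> :: real
  assumes \<beta>_pos: "0 < \<beta>" and \<beta>_le: "\<beta> \<le> B"
begin

lemma abs_beta_le: "\<bar>\<beta>\<bar> \<le> B"
  using \<beta>_pos \<beta>_le by simp

lemma profile_0: "profile \<alpha> \<beta> 0 = \<alpha>"
  using profile_eq[OF abs_beta_le, of \<alpha> 0] by simp

lemma mono_profile: "mono (profile \<alpha> \<beta>)"
proof (rule monoI)
  fix x y :: real
  assume "x \<le> y"
  then show "profile \<alpha> \<beta> x \<le> profile \<alpha> \<beta> y"
    by (rule DERIV_nonneg_imp_nondecreasing)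
      (use has_real_derivative_profile[OF abs_beta_le] \<beta>_pos density_pos
        in \<open>auto intro!: exI[of _ "\<beta> * density (profile \<alpha> \<beta>) _"] simp: less_imp_le\<close>)
qed

lemma profile_increment_ge:
  assumes "-1 \<le> x" and "x \<le> y" and "y \<le> 1"
  shows "\<beta> * c1 * (y - x) \<le> profile \<alpha> \<beta> y - profile \<alpha> \<beta> x"
proof -
  have "profile \<alpha> \<beta> x - \<beta> * c1 * x \<le> profile \<alpha> \<beta> y - \<beta> * c1 * y"
  proof (rule DERIV_nonneg_imp_nondecreasing[OF assms(2)])
    fix t
    assume "x \<le> t" and "t \<le> y"
    then have "\<beta> * c1 \<le> \<beta> * density (profile \<alpha> \<beta>) t"
      using assms \<beta>_pos by (intro mult_left_mono density_ge continuous_on_profile) auto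
    then show "\<exists>d. ((\<lambda>t. profile \<alpha> \<beta> t - \<beta> * c1 * t) has_real_derivative d) (at t) \<and> 0 \<le> d"
      by (intro exI[of _ "\<beta> * density (profile \<alpha> \<beta>) t - \<beta> * c1"])
        (auto intro!: derivative_eq_intros has_real_derivative_profile abs_beta_le)
  qed
  then show ?thesis
    by (simp add: algebra_simps)
qed

lemma abs_profile_sub_le: "\<bar>profile \<alpha> \<beta> x - \<alpha>\<bar> \<le> \<beta> * C0"
  using profile_eq[OF abs_beta_le, of \<alpha> x] \<beta>_pos
    abs_primitive_density_le[OF continuous_on_profile, of \<alpha> \<beta> x]
  by (simp add: abs_mult mult_left_mono)

lemma profile_bounds: "\<alpha> - \<beta> * C0 \<le> profile \<alpha> \<beta> x" "profile \<alpha> \<beta> x \<le> \<alpha> + \<beta> * C0"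
  using abs_profile_sub_le[of x] by (simp_all add: abs_le_iff)

lemma bdd_range_profile: "bdd_above (range (profile \<alpha> \<beta>))" "bdd_below (range (profile \<alpha> \<beta>))"
  using profile_bounds by (auto intro!: bdd_aboveI[of _ "\<alpha> + \<beta> * C0"] bdd_belowI[of _ "\<alpha> - \<beta> * C0"])

lemma profile_tendsto_top: "(profile \<alpha> \<beta> \<longlongrightarrow> profile_top \<alpha> \<beta>) at_top"
  unfolding profile_top_def by (rule mono_tendsto_Sup_at_top[OF mono_profile bdd_range_profile(1)])

lemma profile_tendsto_bot: "(profile \<alpha> \<beta> \<longlongrightarrow> profile_bot \<alpha> \<beta>) at_bot"
  unfolding profile_bot_def by (rule mono_tendsto_Inf_at_bot[OF mono_profile bdd_range_profile(2)])

lemma profile_bot_le_top: "profile_bot \<alpha> \<beta> \<le> profile \<alpha> \<beta> x" "profile \<alpha> \<beta> x \<le> profile_top \<alpha> \<beta>"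
  unfolding profile_bot_def profile_top_def using bdd_range_profile
  by (auto intro: cInf_lower cSup_upper)

lemma abs_profile_top_diff_le:
  assumes "0 \<le> x"
  shows "\<bar>profile \<alpha> \<beta> x - profile_top \<alpha> \<beta>\<bar> \<le> B * C0 * exp (- x)"
proof (rule abs_diff_limit_le_at_top[OF has_real_derivative_profile[OF abs_beta_le] _
      profile_tendsto_top])
  fix t
  assume "x \<le> t"
  then have "\<bar>density (profile \<alpha> \<beta>) t\<bar> \<le> C0 * exp (- t)"
    using assms density_le[OF continuous_on_profile, of \<alpha> \<beta> t] density_pos[of "profile \<alpha> \<beta>" t]
    by simp
  then show "\<bar>\<beta> * density (profile \<alpha> \<beta>) t\<bar> \<le> B * C0 * exp (- t)"
    using mult_mono[OF abs_beta_le] B_pos by (simp add: abs_mult mult.assoc)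
qed

lemma abs_profile_bot_diff_le:
  assumes "x \<le> 0"
  shows "\<bar>profile \<alpha> \<beta> x - profile_bot \<alpha> \<beta>\<bar> \<le> B * C0 * exp x"
proof (rule abs_diff_limit_le_at_bot[OF has_real_derivative_profile[OF abs_beta_le] _
      profile_tendsto_bot])
  fix t
  assume "t \<le> x"
  then have "\<bar>density (profile \<alpha> \<beta>) t\<bar> \<le> C0 * exp t"
    using assms density_le[OF continuous_on_profile, of \<alpha> \<beta> t] density_pos[of "profile \<alpha> \<beta>" t]
    by simp
  then show "\<bar>\<beta> * density (profile \<alpha> \<beta>) t\<bar> \<le> B * C0 * exp t"
    using mult_mono[OF abs_beta_le] B_pos by (simp add: abs_mult mult.assoc)
qed

lemma profile_top_le: "profile_top \<alpha> \<beta> \<le> \<alpha> + \<beta> * C0"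
  unfolding profile_top_def using profile_bounds by (intro cSup_least) auto

lemma profile_bot_ge: "\<alpha> - \<beta> * C0 \<le> profile_bot \<alpha> \<beta>"
  unfolding profile_bot_def using profile_bounds by (intro cInf_greatest) auto

lemma profile_bot_less: "profile_bot \<alpha> \<beta> < \<alpha>"
  using profile_increment_ge[of "-1" 0] profile_bot_le_top(1)[of "-1"] profile_0
    mult_pos_pos[OF \<beta>_pos c1_pos]
  by simp

lemma profile_top_greater: "\<alpha> < profile_top \<alpha> \<beta>"
  using profile_increment_ge[of 0 1] profile_bot_le_top(2)[of 1] profile_0
    mult_pos_pos[OF \<beta>_pos c1_pos]
  by simp

lemma profile_spread_ge: "2 * \<beta> * c1 \<le> profile_top \<alpha> \<beta> - profile_bot \<alpha> \<beta>"
  using profile_increment_ge[of "-1" 1] profile_bot_le_top[of "-1"] profile_bot_le_top[of 1] by simp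

end

lemma continuous_on_profile_top:
  assumes S: "\<And>p. p \<in> S \<Longrightarrow> 0 < snd p \<and> snd p \<le> B"
  shows "continuous_on S (\<lambda>p. profile_top (fst p) (snd p))"
proof (rule continuous_on_if_tail_estimate[where A = "2 * B * C0" and L = "2 * (1 + C0)"
      and l = lam])
  fix p q :: "real \<times> real" and x :: real
  assume "p \<in> S" and "q \<in> S" and "0 \<le> x"
  then show "\<bar>profile_top (fst p) (snd p) - profile_top (fst q) (snd q)\<bar>
      \<le> 2 * B * C0 * exp (- x) + exp (lam * x) * (2 * (1 + C0)) * dist p q"
    using abs_profile_top_diff_le[where \<alpha> = "fst p" and \<beta> = "snd p" and x = x]
      abs_profile_top_diff_le[where \<alpha> = "fst q" and \<beta> = "snd q" and x = x]
      abs_profile_params_diff_le[of p q x] S[of p] S[of q]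
    by (simp add: abs_le_iff)
qed (use B_pos C0_pos in auto)

lemma continuous_on_profile_bot:
  assumes S: "\<And>p. p \<in> S \<Longrightarrow> 0 < snd p \<and> snd p \<le> B"
  shows "continuous_on S (\<lambda>p. profile_bot (fst p) (snd p))"
proof (rule continuous_on_if_tail_estimate[where A = "2 * B * C0" and L = "2 * (1 + C0)"
      and l = lam])
  fix p q :: "real \<times> real" and x :: real
  assume "p \<in> S" and "q \<in> S" and "0 \<le> x"
  then show "\<bar>profile_bot (fst p) (snd p) - profile_bot (fst q) (snd q)\<bar>
      \<le> 2 * B * C0 * exp (- x) + exp (lam * x) * (2 * (1 + C0)) * dist p q"
    using abs_profile_bot_diff_le[where \<alpha> = "fst p" and \<beta> = "snd p" and x = "- x"]
      abs_profile_bot_diff_le[where \<alpha> = "fst q" and \<beta> = "snd q" and x = "- x"]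
      abs_profile_params_diff_le[of p q "- x"] S[of p] S[of q]
    by (simp add: abs_le_iff)
qed (use B_pos C0_pos in auto)

definition spread :: "real \<times> real \<Rightarrow> real" where
  "spread p = profile_top (fst p) (snd p) - profile_bot (fst p) (snd p)"

definition param_box :: "real \<Rightarrow> real \<Rightarrow> (real \<times> real) set" where
  "param_box a b = {a..b} \<times> {(b - a) / (2 * C0)..B}"

text \<open>A fixed point of \<open>param_map a b\<close> is a parameter whose profile has spread \<open>b - a\<close> and
  bottom \<open>a\<close>.\<close>
definition param_map :: "real \<Rightarrow> real \<Rightarrow> real \<times> real \<Rightarrow> real \<times> real" where
  "param_map a b p = (a + (b - a) * (fst p - profile_bot (fst p) (snd p)) / spread p,
                      (b - a) * snd p / spread p)"

lemma param_box_snd: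
  assumes "a < b" and "p \<in> param_box a b"
  shows "0 < snd p \<and> snd p \<le> B"
proof -
  have "0 < (b - a) / (2 * C0)"
    using assms(1) C0_pos by simp
  then show ?thesis
    using assms(2) by (auto simp: param_box_def)
qed

lemma spread_pos:
  assumes "a < b" and "p \<in> param_box a b"
  shows "spread p > 0"
proof -
  have "0 < snd p" "snd p \<le> B"
    using param_box_snd[OF assms] by auto
  then have "profile_bot (fst p) (snd p) < fst p" "fst p < profile_top (fst p) (snd p)"
    by (rule profile_bot_less profile_top_greater)+
  then show ?thesis
    unfolding spread_def by linarith
qed

lemma continuous_on_param_map:
  assumes "a < b"
  shows "continuous_on (param_box a b) (param_map a b)"
proof -
  have "continuous_on (param_box a b) spread"
    unfolding spread_def[abs_def]
    by (intro continuous_intros continuous_on_profile_top continuous_on_profile_bot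
        param_box_snd[OF assms])
  moreover have "\<forall>p\<in>param_box a b. spread p \<noteq> 0"
    using spread_pos[OF assms] by fastforce
  ultimately show ?thesis
    unfolding param_map_def[abs_def]
    by (intro continuous_intros continuous_on_profile_bot param_box_snd[OF assms]) auto
qed

lemma param_map_into_box:
  assumes "a < b" and B_eq: "B = (b - a) / (2 * c1)" and p: "p \<in> param_box a b"
  shows "param_map a b p \<in> param_box a b"
proof -
  obtain \<alpha> \<beta> where p_eq: "p = (\<alpha>, \<beta>)"
    by fastforce
  have \<beta>: "0 < \<beta>" "\<beta> \<le> B"
    using param_box_snd[OF \<open>a < b\<close> p] p_eq by auto
  have D_pos: "spread p > 0"
    using spread_pos[OF \<open>a < b\<close> p] .
  have "2 * \<beta> * c1 \<le> spread p" and "spread p \<le> 2 * \<beta> * C0"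
    using profile_spread_ge[OF \<beta>, of \<alpha>] profile_top_le[OF \<beta>, of \<alpha>] profile_bot_ge[OF \<beta>, of \<alpha>] p_eq
    by (auto simp: spread_def)
  have "profile_bot \<alpha> \<beta> < \<alpha>" and "\<alpha> < profile_top \<alpha> \<beta>"
    using profile_bot_less[OF \<beta>] profile_top_greater[OF \<beta>] by auto
  then have "0 \<le> (\<alpha> - profile_bot \<alpha> \<beta>) / spread p" and "(\<alpha> - profile_bot \<alpha> \<beta>) / spread p \<le> 1"
    using D_pos p_eq by (simp_all add: spread_def divide_le_eq)
  then have "0 \<le> (b - a) * ((\<alpha> - profile_bot \<alpha> \<beta>) / spread p)"
    and "(b - a) * ((\<alpha> - profile_bot \<alpha> \<beta>) / spread p) \<le> b - a"
    using \<open>a < b\<close> by (simp_all del: times_divide_eq_right add: mult_left_le)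
  then have "a + (b - a) * (\<alpha> - profile_bot \<alpha> \<beta>) / spread p \<in> {a..b}"
    by simp
  moreover have "(b - a) / (2 * C0) \<le> (b - a) * \<beta> / spread p"
  proof -
    have "(b - a) / (2 * C0) = (b - a) * \<beta> / (2 * \<beta> * C0)"
      using \<beta> by simp
    also have "\<dots> \<le> (b - a) * \<beta> / spread p"
      using \<open>spread p \<le> 2 * \<beta> * C0\<close> D_pos \<open>a < b\<close> \<beta> by (intro divide_left_mono) auto
    finally show ?thesis .
  qed
  moreover have "(b - a) * \<beta> / spread p \<le> B"
  proof -
    have "(b - a) * \<beta> / spread p \<le> (b - a) * \<beta> / (2 * \<beta> * c1)"
      using \<open>2 * \<beta> * c1 \<le> spread p\<close> \<open>a < b\<close> \<beta> c1_pos D_pos by (intro divide_left_mono) auto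
    also have "\<dots> = B"
      using \<beta> B_eq by simp
    finally show ?thesis .
  qed
  ultimately show ?thesis
    by (simp add: param_map_def param_box_def p_eq)
qed

lemma profile_limits_attainable:
  assumes "a < b" and B_eq: "B = (b - a) / (2 * c1)"
  obtains \<alpha> \<beta> where "0 < \<beta>" "\<beta> \<le> B" "profile_bot \<alpha> \<beta> = a" "profile_top \<alpha> \<beta> = b"
proof -
  have "(b - a) / (2 * C0) \<le> B"
    unfolding B_eq using \<open>a < b\<close> c1_pos c1_le_C0 by (intro divide_left_mono) auto
  then have "compact (param_box a b)" "convex (param_box a b)" "param_box a b \<noteq> {}"
    using \<open>a < b\<close> by (auto simp: param_box_def compact_Times convex_Times)
  then obtain p where p: "p \<in> param_box a b" and fixed: "param_map a b p = p"
    using brouwer[OF _ _ _ continuous_on_param_map[OF \<open>a < b\<close>]] param_map_into_box[OF assms]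
    by blast
  obtain \<alpha> \<beta> where p_eq: "p = (\<alpha>, \<beta>)"
    by fastforce
  have \<beta>: "0 < \<beta>" "\<beta> \<le> B"
    using param_box_snd[OF \<open>a < b\<close> p] p_eq by auto
  have "spread p > 0"
    using spread_pos[OF \<open>a < b\<close> p] .
  have "(b - a) * \<beta> / spread p = \<beta>"
    using fixed p_eq by (simp add: param_map_def)
  then have "spread p = b - a"
    using \<open>spread p > 0\<close> \<beta> by (simp add: divide_eq_eq)
  moreover have "a + (b - a) * (\<alpha> - profile_bot \<alpha> \<beta>) / spread p = \<alpha>"
    using fixed p_eq by (simp add: param_map_def)
  ultimately have "profile_bot \<alpha> \<beta> = a"
    using \<open>a < b\<close> by simp
  moreover have "profile_top \<alpha> \<beta> = b"
    using \<open>spread p = b - a\<close> \<open>profile_bot \<alpha> \<beta> = a\<close> p_eq by (simp add: spread_def)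
  ultimately show ?thesis
    using that \<beta> by blast
qed

end

section \<open>Existence\<close>

lemma lipschitz_on_clamp:
  fixes a b :: real
  shows "1-lipschitz_on UNIV (\<lambda>v. max a (min b v))"
  by (rule lipschitz_onI) (auto simp: dist_real_def)

lemma dafermos_profile_exists_increasing:
  assumes f: "C1_real f" and "\<epsilon> > 0" and "uL < uR" and L: "L-lipschitz_on {uL..uR} (deriv f)"
  obtains u where "dafermos_profile f \<epsilon> uL uR u"
proof -
  define g where "g v = deriv f (max uL (min uR v))" for v
  have "(L * 1)-lipschitz_on UNIV g"
    unfolding g_def
    by (rule lipschitz_on_compose2[OF lipschitz_on_clamp lipschitz_on_subset[OF L]])
      (use \<open>uL < uR\<close> in auto)
  then have g_lip: "L-lipschitz_on UNIV g"
    by simp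
  have "bounded (deriv f ` {uL..uR})"
    by (intro compact_imp_bounded compact_continuous_image
        continuous_on_subset[OF C1_realD(2)[OF f]]) auto
  then obtain M where M: "\<And>v. v \<in> {uL..uR} \<Longrightarrow> \<bar>deriv f v\<bar> \<le> M"
    unfolding bounded_iff by (auto simp del: atLeastAtMost_iff)
  define B where "B = (uR - uL) / (2 * exp (- (M + 1) / \<epsilon>))"
  interpret profile_construction g M L \<epsilon> B
  proof
    show "continuous_on UNIV g"
      using g_lip by (rule lipschitz_on_continuous_on)
    show "\<bar>g x\<bar> \<le> M" for x
      using M \<open>uL < uR\<close> by (simp add: g_def)
    show "\<bar>g x - g y\<bar> \<le> L * \<bar>x - y\<bar>" for x y
      using lipschitz_onD[OF g_lip] by (simp add: dist_real_def)
    show "L \<ge> 0"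
      using lipschitz_on_nonneg[OF L] .
    show "\<epsilon> > 0" "B > 0"
      using \<open>\<epsilon> > 0\<close> \<open>uL < uR\<close> by (simp_all add: B_def)
  qed
  have "B = (uR - uL) / (2 * c1)"
    by (simp add: B_def c1_def)
  then obtain \<alpha> \<beta> where \<beta>: "0 < \<beta>" "\<beta> \<le> B" and ends: "profile_bot \<alpha> \<beta> = uL" "profile_top \<alpha> \<beta> = uR"
    by (rule profile_limits_attainable[OF \<open>uL < uR\<close>])
  let ?u = "profile \<alpha> \<beta>"
  have "g (?u x) = deriv f (?u x)" for x
    using profile_bot_le_top[OF \<beta>, of \<alpha> x] ends by (simp add: g_def)
  then have "dafermos_profile f \<epsilon> uL uR ?u"
    unfolding dafermos_profile_def
    using C2_real_profile_and_ode[of \<beta> \<alpha>] \<beta> ends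
      profile_tendsto_bot[OF \<beta>, where \<alpha> = \<alpha>] profile_tendsto_top[OF \<beta>, where \<alpha> = \<alpha>]
    by simp
  then show ?thesis
    using that by blast
qed

lemma C1_real_reflect:
  assumes f: "C1_real f"
  shows "C1_real (\<lambda>v. - f (- v))" and "deriv (\<lambda>v. - f (- v)) v = deriv f (- v)"
proof -
  have f': "((\<lambda>v. - f (- v)) has_real_derivative deriv f (- v)) (at v)" for v
  proof -
    have "((\<lambda>v. f (- v)) has_real_derivative deriv f (- v) * (- 1)) (at v)"
      by (rule DERIV_chain2[OF C1_realD(1)[OF f]]) (auto intro!: derivative_eq_intros)
    then show ?thesis
      using DERIV_minus by fastforce
  qed
  then show deriv_eq: "deriv (\<lambda>v. - f (- v)) v = deriv f (- v)" for v
    by (rule DERIV_imp_deriv)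
  show "C1_real (\<lambda>v. - f (- v))"
    unfolding C1_real_def deriv_eq
  proof (intro conjI allI)
    show "(\<lambda>v. - f (- v)) differentiable at x" for x
      using f' real_differentiable_def by blast
    show "continuous_on UNIV (\<lambda>x. deriv f (- x))"
      by (rule continuous_on_compose2[OF C1_realD(2)[OF f]]) (auto intro!: continuous_intros)
  qed
qed

lemma dafermos_profile_reflect:
  assumes f: "C1_real f" and u: "dafermos_profile (\<lambda>v. - f (- v)) \<epsilon> (- uL) (- uR) u"
  shows "dafermos_profile f \<epsilon> uL uR (\<lambda>x. - u x)"
proof -
  note u_props = dafermos_profileD[OF u]
  have u': "deriv (\<lambda>x. - u x) = (\<lambda>x. - deriv u x)"
    using u_props(1) by (auto intro!: DERIV_imp_deriv derivative_eq_intros)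
  have u'': "deriv (\<lambda>x. - deriv u x) = (\<lambda>x. - deriv (deriv u) x)"
    using u_props(2) by (auto intro!: DERIV_imp_deriv derivative_eq_intros)
  have "C2_real (\<lambda>x. - u x)"
    unfolding C2_real_def u' u''
  proof (intro conjI allI)
    show "(\<lambda>x. - u x) differentiable at x" for x
      using u_props(1) by (auto simp: real_differentiable_def intro!: derivative_eq_intros)
    show "(\<lambda>x. - deriv u x) differentiable at x" for x
      using u_props(2) by (auto simp: real_differentiable_def intro!: derivative_eq_intros)
    show "continuous_on UNIV (\<lambda>x. - deriv (deriv u) x)"
      using u unfolding dafermos_profile_def C2_real_def by (auto intro: continuous_intros)
  qed
  moreover have "\<epsilon> * deriv (deriv (\<lambda>x. - u x)) x = (deriv f (- u x) - x) * deriv (\<lambda>x. - u x) x"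
    for x
    unfolding u' u'' using u_props(3)[of x] C1_real_reflect(2)[OF f, of "u x"] by simp
  moreover have "((\<lambda>x. - u x) \<longlongrightarrow> uL) at_bot" "((\<lambda>x. - u x) \<longlongrightarrow> uR) at_top"
    using tendsto_minus[OF u_props(4)] tendsto_minus[OF u_props(5)] by simp_all
  ultimately show ?thesis
    unfolding dafermos_profile_def by simp
qed

theorem dafermos_profile_exists:
  assumes f: "C1_real f" and "\<epsilon> > 0"
    and L: "uL \<noteq> uR \<Longrightarrow> (\<exists>L. L-lipschitz_on {min uL uR..max uL uR} (deriv f))"
  obtains u where "dafermos_profile f \<epsilon> uL uR u"
proof (cases uL uR rule: linorder_cases)
  case less
  then show ?thesis
    using L dafermos_profile_exists_increasing[OF f \<open>\<epsilon> > 0\<close> less] that by auto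
next
  case equal
  then have "dafermos_profile f \<epsilon> uL uR (\<lambda>x. uL)"
    unfolding dafermos_profile_def C2_real_def by simp
  then show ?thesis
    using that by blast
next
  case greater
  then obtain L where L: "L-lipschitz_on {uR..uL} (deriv f)"
    using L by auto
  have "(L * 1)-lipschitz_on {- uL..- uR} (\<lambda>v. deriv f (- v))"
    by (rule lipschitz_on_compose2[OF _ lipschitz_on_subset[OF L]])
      (auto intro!: lipschitz_onI simp: dist_real_def)
  then have "L-lipschitz_on {- uL..- uR} (deriv (\<lambda>v. - f (- v)))"
    by (simp add: C1_real_reflect(2)[OF f])
  moreover have "- uL < - uR"
    using greater by simp
  ultimately obtain u where "dafermos_profile (\<lambda>v. - f (- v)) \<epsilon> (- uL) (- uR) u"
    using dafermos_profile_exists_increasing[OF C1_real_reflect(1)[OF f] \<open>\<epsilon> > 0\<close>] by blast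
  then show ?thesis
    using dafermos_profile_reflect[OF f] that by blast
qed

theorem theorem1p1:
  fixes f :: "real \<Rightarrow> real" and uL uR \<epsilon> :: real
  assumes "C1_real f"
    and "\<epsilon> > 0"
    and "uL \<noteq> uR \<Longrightarrow> (\<exists>L. L-lipschitz_on {min uL uR..max uL uR} (deriv f))"
  shows "\<exists>!u. C2_real u
     \<and> (\<forall>\<xi>. \<epsilon> * deriv (deriv u) \<xi> = (deriv f (u \<xi>) - \<xi>) * deriv u \<xi>)
     \<and> (u \<longlongrightarrow> uL) at_bot \<and> (u \<longlongrightarrow> uR) at_top"
proof -
  obtain u where "dafermos_profile f \<epsilon> uL uR u"
    using dafermos_profile_exists[OF assms] .
  then have "\<exists>!u. dafermos_profile f \<epsilon> uL uR u"
    using dafermos_profile_unique[OF assms(1,2)] by blast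
  then show ?thesis
    unfolding dafermos_profile_def .
qed

end
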